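(* Let $n\geq 0$ and $0\leq m\leq n$ be integers. Then \[ \sum_{\substack{k=0\\ k\neq m}}^{n}{n\brack k}\frac{(q/z;q)_k (z;q)_{n-k}}{1-q^{k-m}} z^k =(-1)^m q^{\binom{m+1}{2}}{n\brack m}(zq^{-m};q)_n \left(\sum_{k=0}^{n-1} \frac{zq^{k-m}}{1-zq^{k-m}}- \sum_{\substack{k=0\\ k\neq m}}^{n} \frac{q^{k-m}}{1-q^{k-m}} \right). \]
   Context: For $N\geq 0$, $(x;q)_N=(1-x)(1-xq)\cdots(1-xq^{N-1})$ (with $(x;q)_0=1$). The $q$-binomial coefficient is ${n\brack k}=\frac{(q;q)_n}{(q;q)_k(q;q)_{n-k}}$ for $0\leq k\leq n$ and $0$ otherwise. The identity is one of rational functions in $q$ and $z$. *)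

theory Defs
  imports Complex_Main
begin

definition qpoch :: "'a::field \<Rightarrow> 'a \<Rightarrow> nat \<Rightarrow> 'a" where
  "qpoch x q N = (\<Prod>i<N. (1 - x * q ^ i))"

definition qbinom :: "'a::field \<Rightarrow> nat \<Rightarrow> nat \<Rightarrow> 'a" where
  "qbinom q n k = (if k \<le> n then qpoch q q n / (qpoch q q k * qpoch q q (n - k)) else 0)"

end

theory Submission
  imports Defs "HOL-Computational_Algebra.Polynomial"
begin

text \<open>
  Put t_k = q^k and r_i = z q^i, and let P(x) = prod_{i<n} (x - r_i) and
  W_k = prod_{j \<noteq> k} (t_k - t_j). Up to the factor q^m (q;q)_n, the k-th summand on the left
  is P(t_k) / (W_k (t_m - t_k)). Since P has degree n, it equals its Lagrange interpolant on the
  n + 1 nodes t_0, ..., t_n; differentiating the interpolation formula at t_m and comparing with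
  the logarithmic derivative P'(t_m) = P(t_m) sum_i 1/(t_m - r_i) evaluates the sum as
  P(t_m)/W_m (sum_i 1/(t_m - r_i) - sum_{j \<noteq> m} 1/(t_m - t_j)).
\<close>

lemma lagrange_interpolation_eq:
  fixes t :: "'b \<Rightarrow> 'a::field"
  assumes T: "finite T" and inj: "inj_on t T" and deg: "degree p < card T"
  shows "p = (\<Sum>k\<in>T. smult (poly p (t k) / (\<Prod>j\<in>T-{k}. t k - t j)) (\<Prod>j\<in>T-{k}. [:- t j, 1:]))"
    (is "p = ?L")
proof (rule poly_eqI_degree[of "t ` T"])
  have nodes_distinct: "t k - t j \<noteq> 0" if "k \<in> T" "j \<in> T" "j \<noteq> k" for k j
    using inj that by (auto dest: inj_onD)
  show "poly p x = poly ?L x" if "x \<in> t ` T" for x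
  proof -
    from that obtain i where i: "i \<in> T" "x = t i" by blast
    have "poly ?L (t i) = (\<Sum>k\<in>T. poly p (t k) / (\<Prod>j\<in>T-{k}. t k - t j) * (\<Prod>j\<in>T-{k}. t i - t j))"
      by (simp add: poly_sum poly_prod)
    also have "\<dots> = poly p (t i) / (\<Prod>j\<in>T-{i}. t i - t j) * (\<Prod>j\<in>T-{i}. t i - t j)"
      by (subst sum.mono_neutral_right[of T "{i}"]) (use T i in \<open>auto simp: prod_zero_iff\<close>)
    also have "\<dots> = poly p (t i)"
      using T i nodes_distinct by (simp add: prod_zero_iff)
    finally show ?thesis using i by simp
  qed
  have "degree (\<Prod>j\<in>T-{k}. [:- t j, 1:]) < card T" if "k \<in> T" for k
    using degree_prod_sum_le[of "T - {k}" "\<lambda>j. [:- t j, 1:]"] T that card_Diff1_less[of T k] by simp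
  then show "degree ?L < card (t ` T)"
    using deg card_image[OF inj] by (auto intro!: degree_sum_less le_less_trans[OF degree_smult_le])
  show "degree p < card (t ` T)" using deg card_image[OF inj] by simp
qed

lemma poly_pderiv_prod_linear:
  fixes s :: "'b \<Rightarrow> 'a::field"
  assumes "finite S"
  shows "poly (pderiv (\<Prod>j\<in>S. [:- s j, 1:])) x = (\<Sum>a\<in>S. \<Prod>j\<in>S-{a}. x - s j)"
  using assms by (simp add: pderiv_prod pderiv_pCons poly_sum poly_prod)

lemma poly_pderiv_prod_linear_nonroot:
  fixes s :: "'b \<Rightarrow> 'a::field"
  assumes S: "finite S" and x: "\<forall>j\<in>S. x \<noteq> s j"
  shows "poly (pderiv (\<Prod>j\<in>S. [:- s j, 1:])) x = (\<Prod>j\<in>S. x - s j) * (\<Sum>j\<in>S. 1 / (x - s j))"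
  unfolding poly_pderiv_prod_linear[OF S] sum_distrib_left
  using S x by (intro sum.cong) (auto simp: prod_diff1)

lemma poly_pderiv_prod_linear_root:
  fixes s :: "'b \<Rightarrow> 'a::field"
  assumes S: "finite S" and a: "a \<in> S"
  shows "poly (pderiv (\<Prod>j\<in>S. [:- s j, 1:])) (s a) = (\<Prod>j\<in>S-{a}. s a - s j)"
  unfolding poly_pderiv_prod_linear[OF S]
  by (subst sum.mono_neutral_right[of S "{a}"]) (use S a in \<open>auto simp: prod_zero_iff\<close>)

lemma lagrange_sum_div_node_diff:
  fixes t :: "'b \<Rightarrow> 'a::field" and r :: "'c \<Rightarrow> 'a"
  assumes T: "finite T" and inj: "inj_on t T" and m: "m \<in> T"
    and I: "finite I" "card I < card T" and nonroot: "\<forall>i\<in>I. r i \<noteq> t m"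
  shows "(\<Sum>k\<in>T-{m}. (\<Prod>i\<in>I. t k - r i) / ((\<Prod>j\<in>T-{k}. t k - t j) * (t m - t k)))
       = (\<Prod>i\<in>I. t m - r i) / (\<Prod>j\<in>T-{m}. t m - t j)
         * ((\<Sum>i\<in>I. 1 / (t m - r i)) - (\<Sum>j\<in>T-{m}. 1 / (t m - t j)))"
proof -
  define p where "p = (\<Prod>i\<in>I. [:- r i, 1:])"
  define P where "P x = (\<Prod>i\<in>I. x - r i)" for x
  define W where "W k = (\<Prod>j\<in>T-{k}. t k - t j)" for k
  define basis where "basis k = (\<Prod>j\<in>T-{k}. [:- t j, 1:])" for k
  have node_diff: "t k - t j \<noteq> 0" if "k \<in> T" "j \<in> T" "j \<noteq> k" for k j
    using inj that by (auto dest: inj_onD)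
  have Wm: "W m \<noteq> 0"
    using T m node_diff by (auto simp: W_def prod_zero_iff)
  have poly_p: "poly p x = P x" for x
    by (simp add: p_def P_def poly_prod)
  have "degree p < card T"
    using degree_prod_sum_le[OF I(1), of "\<lambda>i. [:- r i, 1:]"] I by (simp add: p_def)
  then have interpolation: "p = (\<Sum>k\<in>T. smult (P (t k) / W k) (basis k))"
    using lagrange_interpolation_eq[OF T inj, of p] unfolding poly_p W_def basis_def by blast
  have basis_m: "poly (pderiv (basis m)) (t m) = W m * (\<Sum>j\<in>T-{m}. 1 / (t m - t j))"
    unfolding basis_def W_def
    by (rule poly_pderiv_prod_linear_nonroot) (use T m node_diff in auto)
  have basis_k: "poly (pderiv (basis k)) (t m) = W m / (t m - t k)" if k: "k \<in> T-{m}" for k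
  proof -
    have "poly (pderiv (basis k)) (t m) = (\<Prod>j\<in>T-{k}-{m}. t m - t j)"
      unfolding basis_def by (rule poly_pderiv_prod_linear_root) (use T m k in auto)
    also have "\<dots> = (\<Prod>j\<in>T-{m}-{k}. t m - t j)"
      by (simp only: Diff_insert2 [symmetric] insert_commute)
    also have "\<dots> = W m / (t m - t k)"
      using T m k node_diff by (simp add: W_def prod_diff1)
    finally show ?thesis .
  qed
  have "P (t m) * (\<Sum>i\<in>I. 1 / (t m - r i)) = poly (pderiv p) (t m)"
    unfolding p_def P_def by (rule poly_pderiv_prod_linear_nonroot[symmetric]) (use I nonroot in auto)
  also have "\<dots> = (\<Sum>k\<in>T. P (t k) / W k * poly (pderiv (basis k)) (t m))"
    by (subst interpolation) (simp add: higher_pderiv_sum[of 1, simplified] pderiv_smult poly_sum)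
  also have "\<dots> = P (t m) / W m * poly (pderiv (basis m)) (t m)
      + (\<Sum>k\<in>T-{m}. P (t k) / W k * poly (pderiv (basis k)) (t m))"
    by (rule sum.remove[OF T m])
  also have "\<dots> = P (t m) * (\<Sum>j\<in>T-{m}. 1 / (t m - t j))
      + W m * (\<Sum>k\<in>T-{m}. P (t k) / (W k * (t m - t k)))"
    using Wm by (simp add: basis_m basis_k sum_distrib_left mult_ac)
  finally show ?thesis
    using Wm by (simp add: P_def W_def field_simps)
qed

lemma prod_lessThan_split:
  fixes f :: "nat \<Rightarrow> 'a::comm_monoid_mult"
  assumes "k \<le> n"
  shows "(\<Prod>i<n. f i) = (\<Prod>i<k. f i) * (\<Prod>i<n-k. f (k + i))"
  using prod.atLeastLessThan_concat[of 0 k n f] prod.shift_bounds_nat_ivl[of f 0 k "n - k"] assms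
  by (simp add: atLeast0LessThan add.commute)

lemma prod_power_diff_below:
  fixes q a :: "'a::field"
  shows "(\<Prod>i<k. q ^ k - a * q ^ i) = q ^ (k choose 2) * (\<Prod>i<k. q ^ Suc i - a)"
proof (induction k)
  case 0
  then show ?case by (simp add: numeral_2_eq_2)
next
  case (Suc k)
  have "(\<Prod>i<Suc k. q ^ Suc k - a * q ^ i) = (q ^ Suc k - a) * (\<Prod>i<k. q * (q ^ k - a * q ^ i))"
    by (subst prod.lessThan_Suc_shift) (simp add: algebra_simps)
  also have "\<dots> = (q ^ Suc k - a) * q ^ k * (\<Prod>i<k. q ^ k - a * q ^ i)"
    by (simp add: prod.distrib)
  also have "\<dots> = q ^ (Suc k choose 2) * (\<Prod>i<Suc k. q ^ Suc i - a)"
    using Suc by (simp add: power_add numeral_2_eq_2 mult_ac)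
  finally show ?case .
qed

lemma prod_power_diff_above:
  fixes q a :: "'a::field"
  shows "(\<Prod>i<N. q ^ k - a * q ^ (k + i)) = q ^ (k * N) * qpoch a q N"
proof -
  have "(\<Prod>i<N. q ^ k - a * q ^ (k + i)) = (\<Prod>i<N. q ^ k * (1 - a * q ^ i))"
    by (simp add: power_add algebra_simps)
  then show ?thesis
    by (simp add: prod.distrib power_mult qpoch_def)
qed

lemma prod_power_diff:
  fixes q a :: "'a::field"
  assumes "k \<le> n"
  shows "(\<Prod>i<n. q ^ k - a * q ^ i)
       = q ^ ((k choose 2) + k * (n - k)) * (\<Prod>i<k. q ^ Suc i - a) * qpoch a q (n - k)"
  unfolding prod_lessThan_split[OF assms, of "\<lambda>i. q ^ k - a * q ^ i"]
    prod_power_diff_below prod_power_diff_above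
  by (simp add: power_add mult_ac)

lemma prod_power_node_diff:
  fixes q :: "'a::field"
  assumes "k \<le> n"
  shows "(\<Prod>j\<in>{0..n}-{k}. q ^ k - q ^ j)
       = (-1) ^ k * q ^ ((k choose 2) + k * (n - k)) * qpoch q q k * qpoch q q (n - k)"
proof -
  define f where "f j = q ^ k - q ^ j" for j
  have "(\<Prod>j\<in>{0..n}-{k}. f j) = (\<Prod>j\<in>{0..<k}. f j) * (\<Prod>j\<in>{0 + Suc k..<n - k + Suc k}. f j)"
  proof -
    have "{0..n}-{k} = {0..<k} \<union> {0 + Suc k..<n - k + Suc k}"
      using assms by auto
    then show ?thesis by (simp add: prod.union_disjoint)
  qed
  also have "\<dots> = (\<Prod>i<k. q ^ k - 1 * q ^ i) * (\<Prod>i<n - k. q ^ k - q * q ^ (k + i))"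
    unfolding prod.shift_bounds_nat_ivl by (simp add: f_def atLeast0LessThan add.commute)
  also have "\<dots> = q ^ (k choose 2) * (\<Prod>i<k. q ^ Suc i - 1) * (q ^ (k * (n - k)) * qpoch q q (n - k))"
    by (simp only: prod_power_diff_below prod_power_diff_above)
  also have "(\<Prod>i<k. q ^ Suc i - 1) = (-1) ^ k * qpoch q q k"
    by (induction k) (simp_all add: qpoch_def algebra_simps)
  finally show ?thesis
    by (simp add: f_def power_add mult_ac)
qed

lemma inj_on_power_atLeastAtMost:
  fixes q :: "'a::field"
  assumes "q \<noteq> 0" and "\<forall>j\<in>{1..n}. q ^ j \<noteq> 1"
  shows "inj_on (\<lambda>k. q ^ k) {0..n}"
proof (rule linorder_inj_onI')
  fix j k assume "j \<in> {0..n}" "k \<in> {0..n}" "j < k"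
  then have "k - j \<in> {1..n}" by auto
  then have "q ^ (k - j) \<noteq> 1" using assms(2) by blast
  moreover have "q ^ k = q ^ j * q ^ (k - j)"
    using \<open>j < k\<close> by (simp flip: power_add)
  ultimately show "q ^ j \<noteq> q ^ k"
    using assms(1) by auto
qed

lemma qpoch_self_nonzero:
  fixes q :: "'a::field"
  assumes "\<forall>j\<in>{1..n}. q ^ j \<noteq> 1" and "k \<le> n"
  shows "qpoch q q k \<noteq> 0"
  using assms by (auto simp: qpoch_def simp flip: power_Suc)

lemma qpoch_div_mult_power:
  fixes q z :: "'a::field"
  assumes "z \<noteq> 0"
  shows "qpoch (q / z) q k * z ^ k = (-1) ^ k * (\<Prod>i<k. q ^ Suc i - z)"
proof -
  have "qpoch (q / z) q k * z ^ k = (\<Prod>i<k. (1 - q / z * q ^ i) * z)"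
    by (simp add: qpoch_def prod.distrib)
  also have "\<dots> = (\<Prod>i<k. -1 * (q ^ Suc i - z))"
    using assms by (intro prod.cong) (simp_all add: field_simps)
  finally show ?thesis
    by (simp only: prod.distrib prod_constant card_lessThan)
qed

lemma qbinom_term_eq:
  fixes q z :: "'a::field"
  assumes "k \<le> n" and "q \<noteq> 0" and "z \<noteq> 0" and "\<forall>j\<in>{1..n}. q ^ j \<noteq> 1"
  shows "qbinom q n k * qpoch (q / z) q k * qpoch z q (n - k) * z ^ k
       = qpoch q q n * (\<Prod>i<n. q ^ k - z * q ^ i) / (\<Prod>j\<in>{0..n}-{k}. q ^ k - q ^ j)"
proof -
  have "qpoch q q k \<noteq> 0" "qpoch q q (n - k) \<noteq> 0"
    using qpoch_self_nonzero[OF assms(4)] assms(1) by auto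
  have "qbinom q n k * qpoch (q / z) q k * qpoch z q (n - k) * z ^ k
      = (-1) ^ k * qpoch q q n * (\<Prod>i<k. q ^ Suc i - z) * qpoch z q (n - k) / (qpoch q q k * qpoch q q (n - k))"
    using assms(1) qpoch_div_mult_power[OF assms(3), of q k] by (simp add: qbinom_def mult_ac)
  also have "\<dots> = qpoch q q n * (\<Prod>i<n. q ^ k - z * q ^ i) / (\<Prod>j\<in>{0..n}-{k}. q ^ k - q ^ j)"
    unfolding prod_power_diff[OF assms(1)] prod_power_node_diff[OF assms(1)]
    using \<open>qpoch q q k \<noteq> 0\<close> \<open>qpoch q q (n - k) \<noteq> 0\<close> assms(2)
    by (cases "even k") (simp_all add: field_simps)
  finally show ?thesis .
qed

lemma qpoch_shift_mult_power:
  fixes q z :: "'a::field"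
  assumes "q \<noteq> 0"
  shows "qpoch (z * q powi (- int m)) q n * q ^ (m * n) = (\<Prod>i<n. q ^ m - z * q ^ i)"
proof -
  have "qpoch (z * q powi (- int m)) q n * q ^ (m * n) = (\<Prod>i<n. (1 - z / q ^ m * q ^ i) * q ^ m)"
    by (simp add: qpoch_def prod.distrib power_int_minus divide_inverse power_mult)
  also have "\<dots> = (\<Prod>i<n. q ^ m - z * q ^ i)"
    using assms by (intro prod.cong) (simp_all add: field_simps)
  finally show ?thesis .
qed

lemma qbinom_coeff_eq:
  fixes q z :: "'a::field"
  assumes "m \<le> n" and "q \<noteq> 0" and "\<forall>j\<in>{1..n}. q ^ j \<noteq> 1"
  shows "(-1) ^ m * q ^ ((m + 1) choose 2) * qbinom q n m * qpoch (z * q powi (- int m)) q n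
       = qpoch q q n * (\<Prod>i<n. q ^ m - z * q ^ i) / (\<Prod>j\<in>{0..n}-{m}. q ^ m - q ^ j)"
proof -
  have "qpoch q q m \<noteq> 0" "qpoch q q (n - m) \<noteq> 0"
    using qpoch_self_nonzero[OF assms(3)] assms(1) by auto
  have "(m + 1 choose 2) + (m choose 2) = m * m"
    by (induction m) (simp_all add: numeral_2_eq_2)
  moreover obtain d where "n = m + d"
    using le_Suc_ex[OF assms(1)] by blast
  ultimately have "m * n = (m + 1 choose 2) + ((m choose 2) + m * (n - m))"
    by (simp add: algebra_simps)
  then show ?thesis
    unfolding prod_power_node_diff[OF assms(1)] qpoch_shift_mult_power[OF assms(2), symmetric]
    using \<open>qpoch q q m \<noteq> 0\<close> \<open>qpoch q q (n - m) \<noteq> 0\<close> assms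
    by (cases "even m") (simp_all add: qbinom_def power_add field_simps)
qed

lemma qbinom_summand_eq:
  fixes q z :: "'a::field"
  assumes "k \<le> n" "k \<noteq> m" and "q \<noteq> 0" and "z \<noteq> 0" and "\<forall>j\<in>{1..n}. q ^ j \<noteq> 1"
  shows "qbinom q n k * qpoch (q / z) q k * qpoch z q (n - k) / (1 - q powi (int k - int m)) * z ^ k
       = q ^ m * qpoch q q n * ((\<Prod>i<n. q ^ k - z * q ^ i) / ((\<Prod>j\<in>{0..n}-{k}. q ^ k - q ^ j) * (q ^ m - q ^ k)))"
proof -
  have "1 - q powi (int k - int m) = (q ^ m - q ^ k) / q ^ m"
    using assms(3) by (simp add: power_int_diff field_simps)
  then have "qbinom q n k * qpoch (q / z) q k * qpoch z q (n - k) / (1 - q powi (int k - int m)) * z ^ k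
      = qbinom q n k * qpoch (q / z) q k * qpoch z q (n - k) * z ^ k * (q ^ m / (q ^ m - q ^ k))"
    by simp
  also have "\<dots> = q ^ m * qpoch q q n * ((\<Prod>i<n. q ^ k - z * q ^ i) / ((\<Prod>j\<in>{0..n}-{k}. q ^ k - q ^ j) * (q ^ m - q ^ k)))"
    using assms by (subst qbinom_term_eq) (simp_all add: ac_simps)
  finally show ?thesis .
qed

lemma sum_powi_ratio_eq:
  fixes q c :: "'a::field"
  assumes "finite S" and "q \<noteq> 0" and "\<forall>k\<in>S. c * q ^ k \<noteq> q ^ m"
  shows "(\<Sum>k\<in>S. c * q powi (int k - int m) / (1 - c * q powi (int k - int m)))
       = q ^ m * (\<Sum>k\<in>S. 1 / (q ^ m - c * q ^ k)) - of_nat (card S)"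
proof -
  have "(\<Sum>k\<in>S. c * q powi (int k - int m) / (1 - c * q powi (int k - int m)))
      = (\<Sum>k\<in>S. q ^ m * (1 / (q ^ m - c * q ^ k)) - 1)"
    using assms by (intro sum.cong) (auto simp: power_int_diff field_simps)
  then show ?thesis
    by (simp add: sum_subtractf sum_distrib_left)
qed

theorem corollary3p1:
  fixes q z :: "'a::field" and n m :: nat
  assumes "m \<le> n"
    and "q \<noteq> 0" and "z \<noteq> 0"
    and "\<forall>j\<in>{1..n}. q ^ j \<noteq> 1"
    and "\<forall>k<n. 1 - z * q powi (int k - int m) \<noteq> 0"
  shows "(\<Sum>k\<in>{0..n} - {m}. qbinom q n k * qpoch (q / z) q k * qpoch z q (n - k)
             / (1 - q powi (int k - int m)) * z ^ k)
       = (-1) ^ m * q ^ ((m + 1) choose 2) * qbinom q n m * qpoch (z * q powi (- int m)) q n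
         * ((\<Sum>k<n. z * q powi (int k - int m) / (1 - z * q powi (int k - int m)))
            - (\<Sum>k\<in>{0..n} - {m}. q powi (int k - int m) / (1 - q powi (int k - int m))))"
proof -
  define P where "P k = (\<Prod>i<n. q ^ k - z * q ^ i)" for k
  define W where "W k = (\<Prod>j\<in>{0..n}-{k}. q ^ k - q ^ j)" for k
  have nodes: "inj_on (\<lambda>k. q ^ k) {0..n}"
    using inj_on_power_atLeastAtMost[OF assms(2,4)] .
  have node_diff: "\<forall>k\<in>{0..n}-{m}. q ^ k \<noteq> q ^ m"
    using inj_onD[OF nodes] assms(1) by fastforce
  have nonroot: "\<forall>i\<in>{..<n}. z * q ^ i \<noteq> q ^ m"
    using assms(2,5) by (auto simp: power_int_diff)
  have "(\<Sum>k\<in>{0..n} - {m}. qbinom q n k * qpoch (q / z) q k * qpoch z q (n - k)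
             / (1 - q powi (int k - int m)) * z ^ k)
      = q ^ m * qpoch q q n * (\<Sum>k\<in>{0..n}-{m}. P k / (W k * (q ^ m - q ^ k)))"
    unfolding sum_distrib_left P_def W_def using assms(2-4)
    by (intro sum.cong refl qbinom_summand_eq) auto
  also have "\<dots> = q ^ m * qpoch q q n * (P m / W m)
      * ((\<Sum>i<n. 1 / (q ^ m - z * q ^ i)) - (\<Sum>j\<in>{0..n}-{m}. 1 / (q ^ m - q ^ j)))"
    using lagrange_sum_div_node_diff[OF _ nodes, of m "{..<n}" "\<lambda>i. z * q ^ i"] assms(1) nonroot
    by (simp add: P_def W_def)
  also have "\<dots> = (-1) ^ m * q ^ ((m + 1) choose 2) * qbinom q n m * qpoch (z * q powi (- int m)) q n
         * ((\<Sum>k<n. z * q powi (int k - int m) / (1 - z * q powi (int k - int m)))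
            - (\<Sum>k\<in>{0..n} - {m}. q powi (int k - int m) / (1 - q powi (int k - int m))))"
    using sum_powi_ratio_eq[of "{0..n}-{m}" q 1 m] node_diff assms(1,2)
    unfolding sum_powi_ratio_eq[OF _ assms(2) nonroot, simplified]
      qbinom_coeff_eq[OF assms(1,2,4), of z, folded P_def W_def]
    by (simp add: algebra_simps)
  finally show ?thesis .
qed

end
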